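(* Let $G$ be a finite quasiprimitive permutation group of O'Nan–Scott type $\mathrm{HA}$, $\mathrm{HS}$, $\mathrm{HC}$ or $\mathrm{TW}$, and let $M$ be a point stabilizer. Then $M$ is a perfect code of $G$.
   Context: A permutation group is quasiprimitive if every non-trivial normal subgroup is transitive; the types $\mathrm{HA},\mathrm{HS},\mathrm{HC},\mathrm{TW},\mathrm{SD},\mathrm{CD},\mathrm{AS},\mathrm{PA}$ of quasiprimitive groups are those of Praeger's O'Nan–Scott classification (1997). For a group $G$ with identity $e$ and an inverse-closed subset $S\subseteq G\setminus\{e\}$, the Cayley graph $\mathrm{Cay}(G,S)$ has vertex set $G$ and edges $\{g,sg\}$ for $s\in S$, $g\in G$. A perfect code in a graph is an independent set $C$ of vertices such that every vertex outside $C$ is adjacent to exactly one vertex of $C$. A subgroup $H$ of $G$ is a perfect code of $G$ if some Cayley graph of $G$ admits $H$ as a perfect code. *)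

theory Defs
  imports "HOL-Algebra.Algebra"
begin

definition perm_grp :: "'a set \<Rightarrow> ('a \<Rightarrow> 'a) set \<Rightarrow> ('a \<Rightarrow> 'a) monoid" where
  "perm_grp \<Omega> G = (BijGroup \<Omega>)\<lparr>carrier := G\<rparr>"

definition transitive_on :: "'a set \<Rightarrow> ('a \<Rightarrow> 'a) set \<Rightarrow> bool" where
  "transitive_on \<Omega> H \<longleftrightarrow> (\<forall>x\<in>\<Omega>. \<forall>y\<in>\<Omega>. \<exists>g\<in>H. g x = y)"

definition regular_on :: "'a set \<Rightarrow> ('a \<Rightarrow> 'a) set \<Rightarrow> bool" where
  "regular_on \<Omega> H \<longleftrightarrow> transitive_on \<Omega> H \<and>
     (\<forall>x\<in>\<Omega>. \<forall>g\<in>H. g x = x \<longrightarrow> g = (\<lambda>y\<in>\<Omega>. y))"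

definition stabilizer_of :: "'a set \<Rightarrow> ('a \<Rightarrow> 'a) set \<Rightarrow> 'a \<Rightarrow> ('a \<Rightarrow> 'a) set" where
  "stabilizer_of \<Omega> G \<alpha> = {g \<in> G. g \<alpha> = \<alpha>}"

definition quasiprimitive :: "'a set \<Rightarrow> ('a \<Rightarrow> 'a) set \<Rightarrow> bool" where
  "quasiprimitive \<Omega> G \<longleftrightarrow> transitive_on \<Omega> G \<and>
     (\<forall>N. N \<lhd> perm_grp \<Omega> G \<and> N \<noteq> {\<lambda>y\<in>\<Omega>. y} \<longrightarrow> transitive_on \<Omega> N)"

definition minimal_normal :: "'a set \<Rightarrow> ('a \<Rightarrow> 'a) set \<Rightarrow> ('a \<Rightarrow> 'a) set \<Rightarrow> bool" where
  "minimal_normal \<Omega> G N \<longleftrightarrow> N \<lhd> perm_grp \<Omega> G \<and> N \<noteq> {\<lambda>y\<in>\<Omega>. y} \<and>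
     (\<forall>K. K \<lhd> perm_grp \<Omega> G \<and> K \<subseteq> N \<longrightarrow> K = {\<lambda>y\<in>\<Omega>. y} \<or> K = N)"

definition nonabelian_power_k_ge2 :: "'a set \<Rightarrow> ('a \<Rightarrow> 'a) set \<Rightarrow> ('a \<Rightarrow> 'a) set \<Rightarrow> bool" where
  "nonabelian_power_k_ge2 \<Omega> G N \<longleftrightarrow>
     (\<exists>(T :: ('a \<Rightarrow> 'a) monoid) (k :: nat). simple_group T \<and> \<not> comm_group T \<and> k \<ge> 2 \<and>
        (perm_grp \<Omega> G)\<lparr>carrier := N\<rparr> \<cong> product_group {..<k} (\<lambda>_. T))"

definition nonabelian_simple_sub :: "'a set \<Rightarrow> ('a \<Rightarrow> 'a) set \<Rightarrow> ('a \<Rightarrow> 'a) set \<Rightarrow> bool" where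
  "nonabelian_simple_sub \<Omega> G N \<longleftrightarrow>
     simple_group ((perm_grp \<Omega> G)\<lparr>carrier := N\<rparr>) \<and> \<not> comm_group ((perm_grp \<Omega> G)\<lparr>carrier := N\<rparr>)"

definition type_HA :: "'a set \<Rightarrow> ('a \<Rightarrow> 'a) set \<Rightarrow> bool" where
  "type_HA \<Omega> G \<longleftrightarrow> (\<exists>N. minimal_normal \<Omega> G N \<and> (\<forall>K. minimal_normal \<Omega> G K \<longrightarrow> K = N) \<and>
      comm_group ((perm_grp \<Omega> G)\<lparr>carrier := N\<rparr>) \<and> regular_on \<Omega> N)"

definition type_HS :: "'a set \<Rightarrow> ('a \<Rightarrow> 'a) set \<Rightarrow> bool" where
  "type_HS \<Omega> G \<longleftrightarrow> (\<exists>N1 N2. N1 \<noteq> N2 \<and> minimal_normal \<Omega> G N1 \<and> minimal_normal \<Omega> G N2 \<and>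
      (\<forall>K. minimal_normal \<Omega> G K \<longrightarrow> K = N1 \<or> K = N2) \<and>
      nonabelian_simple_sub \<Omega> G N1 \<and> nonabelian_simple_sub \<Omega> G N2 \<and>
      (perm_grp \<Omega> G)\<lparr>carrier := N1\<rparr> \<cong> (perm_grp \<Omega> G)\<lparr>carrier := N2\<rparr> \<and>
      regular_on \<Omega> N1 \<and> regular_on \<Omega> N2)"

definition type_HC :: "'a set \<Rightarrow> ('a \<Rightarrow> 'a) set \<Rightarrow> bool" where
  "type_HC \<Omega> G \<longleftrightarrow> (\<exists>N1 N2. N1 \<noteq> N2 \<and> minimal_normal \<Omega> G N1 \<and> minimal_normal \<Omega> G N2 \<and>
      (\<forall>K. minimal_normal \<Omega> G K \<longrightarrow> K = N1 \<or> K = N2) \<and>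
      nonabelian_power_k_ge2 \<Omega> G N1 \<and> nonabelian_power_k_ge2 \<Omega> G N2 \<and>
      (perm_grp \<Omega> G)\<lparr>carrier := N1\<rparr> \<cong> (perm_grp \<Omega> G)\<lparr>carrier := N2\<rparr> \<and>
      regular_on \<Omega> N1 \<and> regular_on \<Omega> N2)"

definition type_TW :: "'a set \<Rightarrow> ('a \<Rightarrow> 'a) set \<Rightarrow> bool" where
  "type_TW \<Omega> G \<longleftrightarrow> (\<exists>N. minimal_normal \<Omega> G N \<and> (\<forall>K. minimal_normal \<Omega> G K \<longrightarrow> K = N) \<and>
      nonabelian_power_k_ge2 \<Omega> G N \<and> regular_on \<Omega> N)"

definition cayley_adj :: "('g, 'b) monoid_scheme \<Rightarrow> 'g set \<Rightarrow> 'g \<Rightarrow> 'g \<Rightarrow> bool" where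
  "cayley_adj G S x y \<longleftrightarrow> x \<in> carrier G \<and> y \<in> carrier G \<and> y \<otimes>\<^bsub>G\<^esub> inv\<^bsub>G\<^esub> x \<in> S"

definition connection_set :: "('g, 'b) monoid_scheme \<Rightarrow> 'g set \<Rightarrow> bool" where
  "connection_set G S \<longleftrightarrow> S \<subseteq> carrier G - {\<one>\<^bsub>G\<^esub>} \<and> (\<forall>s\<in>S. inv\<^bsub>G\<^esub> s \<in> S)"

definition perfect_code_in_cayley :: "('g, 'b) monoid_scheme \<Rightarrow> 'g set \<Rightarrow> 'g set \<Rightarrow> bool" where
  "perfect_code_in_cayley G S C \<longleftrightarrow> C \<subseteq> carrier G \<and>
     (\<forall>x\<in>C. \<forall>y\<in>C. \<not> cayley_adj G S x y) \<and>
     (\<forall>v \<in> carrier G - C. \<exists>!c. c \<in> C \<and> cayley_adj G S v c)"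

definition perfect_code_of_group :: "('g, 'b) monoid_scheme \<Rightarrow> 'g set \<Rightarrow> bool" where
  "perfect_code_of_group G H \<longleftrightarrow> subgroup H G \<and>
     (\<exists>S. connection_set G S \<and> perfect_code_in_cayley G S H)"

end

theory Submission
  imports Defs
begin

(* If H \<le> G has a complement K (a subgroup with K \<inter> H = 1 and G = K H), then every
  coset K v meets H in exactly one point, so H is a perfect code in Cay(G, K - {1}), where the
  neighbourhood of v is (K - {1}) v. A regular subgroup N of a permutation group complements
  every point stabilizer: N \<inter> G_\<alpha> = 1 by semiregularity and G = N G_\<alpha> by transitivity.
  Each of the types HA, HS, HC and TW comes with a regular normal subgroup. *)

lemma (in group) connection_set_subgroup_minus_one:
  assumes "subgroup K G"
  shows "connection_set G (K - {\<one>})"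
  using assms subgroup.subset subgroup.m_inv_closed
  unfolding connection_set_def by fastforce

lemma (in group) perfect_code_in_cayley_complement:
  assumes H: "subgroup H G" and K: "subgroup K G"
    and meet: "K \<inter> H \<subseteq> {\<one>}" and factorization: "carrier G \<subseteq> K <#> H"
  shows "perfect_code_in_cayley G (K - {\<one>}) H"
proof -
  have HG: "H \<subseteq> carrier G" and KG: "K \<subseteq> carrier G"
    using H K subgroup.subset by blast+
  have eq_if_same_K_coset: "c = d" if "c \<in> H" "d \<in> H" "c \<otimes> inv d \<in> K" for c d
  proof -
    have "c \<otimes> inv d \<in> H" using H that by (simp add: subgroup.m_closed subgroup.m_inv_closed)
    then have "c \<otimes> inv d = \<one>" using meet that(3) by blast
    then show ?thesis using that HG by (simp add: subsetD inv_solve_right')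
  qed
  have independent: "\<not> cayley_adj G (K - {\<one>}) x y" if "x \<in> H" "y \<in> H" for x y
  proof
    assume "cayley_adj G (K - {\<one>}) x y"
    then have "y \<otimes> inv x \<in> K" and "y \<otimes> inv x \<noteq> \<one>" by (auto simp: cayley_adj_def)
    with eq_if_same_K_coset that HG show False by (auto intro: r_inv)
  qed
  have unique_neighbour: "\<exists>!c. c \<in> H \<and> cayley_adj G (K - {\<one>}) v c" if v: "v \<in> carrier G - H" for v
  proof -
    obtain k h where k: "k \<in> K" and h: "h \<in> H" and v_eq: "v = k \<otimes> h"
      using factorization v unfolding set_mult_def by blast
    have kG: "k \<in> carrier G" and hG: "h \<in> carrier G" using k h KG HG by blast+
    have "h \<otimes> inv v = inv k" using kG hG v_eq by (simp add: inv_mult_group m_assoc[symmetric])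
    moreover have "inv k \<noteq> \<one>" using v v_eq h kG hG by auto
    ultimately have adj: "cayley_adj G (K - {\<one>}) v h"
      using v hG k K by (simp add: cayley_adj_def subgroup.m_inv_closed)
    show ?thesis
    proof (rule ex1I[of _ h])
      fix c assume c: "c \<in> H \<and> cayley_adj G (K - {\<one>}) v c"
      then have cG: "c \<in> carrier G" and "c \<otimes> inv v \<in> K" using HG by (auto simp: cayley_adj_def)
      then have "(c \<otimes> inv v) \<otimes> inv (h \<otimes> inv v) \<in> K"
        using K \<open>h \<otimes> inv v = inv k\<close> k by (simp add: subgroup.m_closed subgroup.m_inv_closed)
      also have "(c \<otimes> inv v) \<otimes> inv (h \<otimes> inv v) = c \<otimes> inv h"
        using cG hG v by (simp add: inv_mult_group m_assoc inv_solve_left')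
      finally show "c = h" using eq_if_same_K_coset c h by blast
    qed (use h adj in blast)
  qed
  show ?thesis
    unfolding perfect_code_in_cayley_def using HG independent unique_neighbour by blast
qed

lemma (in group) perfect_code_of_group_complement:
  assumes "subgroup H G" and "subgroup K G"
    and "K \<inter> H \<subseteq> {\<one>}" and "carrier G \<subseteq> K <#> H"
  shows "perfect_code_of_group G H"
  unfolding perfect_code_of_group_def
  using assms connection_set_subgroup_minus_one perfect_code_in_cayley_complement by blast

lemma (in group_action) transitive_subgroup_mult_stabilizer:
  assumes N: "subgroup N G" and x: "x \<in> E" and transitive: "\<forall>y\<in>E. \<exists>n\<in>N. \<phi> n x = y"
  shows "N <#> stabilizer G \<phi> x = carrier G"
proof
  interpret group G using group_hom group_hom.axioms(1) by blast
  show "N <#> stabilizer G \<phi> x \<subseteq> carrier G"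
    using subgroup.subset[OF N] stabilizer_subset by (rule set_mult_closed)
  show "carrier G \<subseteq> N <#> stabilizer G \<phi> x"
  proof
    fix g assume g: "g \<in> carrier G"
    obtain n where n: "n \<in> N" and same_image: "\<phi> n x = \<phi> g x"
      using transitive element_image[OF g x] by blast
    have nG: "n \<in> carrier G" using n N subgroup.subset by blast
    have "\<phi> (inv n \<otimes> g) x = \<phi> (inv n) (\<phi> n x)"
      using g nG x same_image by (simp add: composition_rule)
    also have "\<dots> = x" using nG x by (simp add: orbit_sym_aux)
    finally have "inv n \<otimes> g \<in> stabilizer G \<phi> x" using g nG by (simp add: stabilizer_def)
    moreover have "g = n \<otimes> (inv n \<otimes> g)" using g nG by (simp add: m_assoc[symmetric])
    ultimately show "g \<in> N <#> stabilizer G \<phi> x" using n unfolding set_mult_def by blast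
  qed
qed

lemma group_action_perm_grp:
  assumes "subgroup G (BijGroup \<Omega>)"
  shows "group_action (perm_grp \<Omega> G) \<Omega> (\<lambda>g. g)"
proof -
  have "group_action (BijGroup \<Omega>) \<Omega> (\<lambda>g. g)"
    unfolding group_action_def group_hom_def group_hom_axioms_def hom_def
    by (simp add: group_BijGroup)
  then show ?thesis unfolding perm_grp_def using assms by (rule group_action.induced_action)
qed

lemma stabilizer_perm_grp: "stabilizer (perm_grp \<Omega> G) (\<lambda>g. g) \<alpha> = stabilizer_of \<Omega> G \<alpha>"
  by (simp add: stabilizer_def stabilizer_of_def perm_grp_def)

lemma one_perm_grp: "\<one>\<^bsub>perm_grp \<Omega> G\<^esub> = (\<lambda>x\<in>\<Omega>. x)"
  by (simp add: perm_grp_def BijGroup_def)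

lemma holomorph_or_twisted_wreath_type_imp_regular_normal_subgroup:
  assumes "type_HA \<Omega> G \<or> type_HS \<Omega> G \<or> type_HC \<Omega> G \<or> type_TW \<Omega> G"
  obtains N where "N \<lhd> perm_grp \<Omega> G" and "regular_on \<Omega> N"
  using assms unfolding type_HA_def type_HS_def type_HC_def type_TW_def minimal_normal_def
  by blast

theorem lemma5p2:
  fixes \<Omega> :: "'a set" and G :: "('a \<Rightarrow> 'a) set" and \<alpha> :: 'a
  assumes "finite \<Omega>"
    and "subgroup G (BijGroup \<Omega>)"
    and "quasiprimitive \<Omega> G"
    and "type_HA \<Omega> G \<or> type_HS \<Omega> G \<or> type_HC \<Omega> G \<or> type_TW \<Omega> G"
    and "\<alpha> \<in> \<Omega>"
  shows "perfect_code_of_group (perm_grp \<Omega> G) (stabilizer_of \<Omega> G \<alpha>)"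
proof -
  interpret P: group_action "perm_grp \<Omega> G" \<Omega> "\<lambda>g. g"
    using assms(2) by (rule group_action_perm_grp)
  interpret group "perm_grp \<Omega> G" using P.group_hom group_hom.axioms(1) by blast
  obtain N where N: "N \<lhd> perm_grp \<Omega> G" and regular: "regular_on \<Omega> N"
    using assms(4) by (rule holomorph_or_twisted_wreath_type_imp_regular_normal_subgroup)
  have N_subgroup: "subgroup N (perm_grp \<Omega> G)" using N by (rule normal_imp_subgroup)
  show ?thesis
  proof (rule perfect_code_of_group_complement)
    show "subgroup (stabilizer_of \<Omega> G \<alpha>) (perm_grp \<Omega> G)"
      using P.stabilizer_subgroup[OF assms(5)] by (simp add: stabilizer_perm_grp)
    show "N \<inter> stabilizer_of \<Omega> G \<alpha> \<subseteq> {\<one>\<^bsub>perm_grp \<Omega> G\<^esub>}"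
      using regular assms(5) by (auto simp: regular_on_def stabilizer_of_def one_perm_grp)
    have "N <#>\<^bsub>perm_grp \<Omega> G\<^esub> stabilizer_of \<Omega> G \<alpha> = carrier (perm_grp \<Omega> G)"
      using P.transitive_subgroup_mult_stabilizer[OF N_subgroup assms(5)] regular assms(5)
      by (simp add: regular_on_def transitive_on_def stabilizer_perm_grp)
    then show "carrier (perm_grp \<Omega> G) \<subseteq> N <#>\<^bsub>perm_grp \<Omega> G\<^esub> stabilizer_of \<Omega> G \<alpha>" by simp
  qed fact
qed

end
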